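(* Let $J$ be a finite set and let $V=\bigoplus_{i,j\in J}V_{ij}$ be a connected bi-$J$-graded finite dimensional vector space, and let $\Gamma$ be the directed graph with vertex set $J$ whose edges from $i$ to $j$ form a chosen basis of $V_{ij}$. Then the monoidal algebra $\mathcal{P}(\mathrm{Vec}(J\times J),V)_{\bullet\to\bullet}$, given by $\mathcal{P}_{m\to n}=\mathrm{Hom}_{\mathrm{Vec}(J\times J)}(V^{\otimes m}\to V^{\otimes n})$ with tangles acting by the graphical calculus, is isomorphic to the graph monoidal algebra $\mathcal{GMA}(\Gamma)_{\bullet\to\bullet}$.
   Context: $\mathrm{Vec}(J\times J)$ is the tensor category of finite dimensional bi-$J$-graded vector spaces $V=\bigoplus_{i,j}V_{ij}$ with grading-preserving linear maps and tensor product $(V\otimes W)_{ik}=\bigoplus_{j}V_{ij}\otimes W_{jk}$. $V$ is connected if for all $i,k\in J$ there is a sequence $i=j_0,\dots,j_n=k$ with $V_{j_{\ell-1}j_\ell}\ne0$. A monoidal tangle (single label) is a rectangle with finitely many rectangles removed and non-crossing strings, oriented upward with no local maxima or minima, beginning and ending on tops/bottoms of rectangles, up to such isotopy; monoidal tangles form a colored operad by insertion. A monoidal algebra is a family of vector spaces $\mathcal{P}_{m\to n}$ ($m,n\ge0$) with a multilinear action of monoidal tangles (a tangle with $k$ inputs having $m_i$ strings at the bottom and $n_i$ at the top of the $i$th input gives a map $\prod_i\mathcal{P}_{m_i\to n_i}\to\mathcal{P}_{m_0\to n_0}$) compatible with composition. An isomorphism of monoidal algebras is a family of linear isomorphisms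 intertwining all tangle actions. The graph monoidal algebra $\mathcal{GMA}(\Gamma)_{m\to n}$ has basis the pairs $(p,q)$ of paths in $\Gamma$ of lengths $m,n$ with the same source and same target; a tangle $T$ acts by $T((p_1,q_1),\dots,(p_k,q_k))=\sum_\sigma\prod_i\delta_{\sigma|_i=(p_i,q_i)}\,\sigma|_0$, the sum over states $\sigma$ (assignments of vertices to regions and edges to strings such that a string labelled $\varepsilon$ has $s(\varepsilon)$ on its left region and $t(\varepsilon)$ on its right), where $\sigma|_i$ is the pair of paths read left to right along the bottom and top of the $i$th rectangle. *)

theory Defs
  imports Main
begin

text \<open>Vertices: a finite type 'j (the finite set J). Edges: a finite type 'e with
source s and target t. The bi-graded space V has V_ij = functions 'e => 'k supported on the
edges from i to j; the indicator functions of edges are the chosen basis.\<close>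

definition Vcomp :: "('e \<Rightarrow> 'j) \<Rightarrow> ('e \<Rightarrow> 'j) \<Rightarrow> 'j \<Rightarrow> 'j \<Rightarrow> ('e \<Rightarrow> 'k::zero) set" where
  "Vcomp s t i j = {x. \<forall>e. x e \<noteq> 0 \<longrightarrow> s e = i \<and> t e = j}"

definition connected_bigraded :: "('j \<Rightarrow> 'j \<Rightarrow> ('e \<Rightarrow> 'k::zero) set) \<Rightarrow> bool" where
  "connected_bigraded W \<longleftrightarrow>
     (\<forall>i k. \<exists>js. js \<noteq> [] \<and> hd js = i \<and> last js = k \<and>
        (\<forall>u. Suc u < length js \<longrightarrow> W (js ! u) (js ! Suc u) \<noteq> {\<lambda>_. 0}))"

fun walk :: "('e \<Rightarrow> 'j) \<Rightarrow> ('e \<Rightarrow> 'j) \<Rightarrow> 'j \<Rightarrow> 'e list \<Rightarrow> bool" where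
  "walk s t v [] = True"
| "walk s t v (e # es) = (s e = v \<and> walk s t (t e) es)"

fun endv :: "('e \<Rightarrow> 'j) \<Rightarrow> 'j \<Rightarrow> 'e list \<Rightarrow> 'j" where
  "endv t v [] = v"
| "endv t v (e # es) = endv t (t e) es"

text \<open>A path is a start vertex together with a list of edges (so length-0 paths are vertices).\<close>
definition paths :: "('e \<Rightarrow> 'j) \<Rightarrow> ('e \<Rightarrow> 'j) \<Rightarrow> nat \<Rightarrow> ('j \<times> 'e list) set" where
  "paths s t m = {(v, es). length es = m \<and> walk s t v es}"

definition psrc :: "('j \<times> 'e list) \<Rightarrow> 'j" where
  "psrc p = fst p"

definition ptgt :: "('e \<Rightarrow> 'j) \<Rightarrow> ('j \<times> 'e list) \<Rightarrow> 'j" where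
  "ptgt t p = endv t (fst p) (snd p)"

definition subpath :: "('e \<Rightarrow> 'j) \<Rightarrow> nat \<Rightarrow> nat \<Rightarrow> ('j \<times> 'e list) \<Rightarrow> ('j \<times> 'e list)" where
  "subpath t l m p = (endv t (fst p) (take l (snd p)), take m (drop l (snd p)))"

text \<open>V^{tensor m} has basis the paths of length m (e_{p} tensor e_{p'} = e_{pp'} if composable,
  and 0 otherwise, by the definition of the tensor product of Vec(J x J)).
  Vectors are functions on paths supported on paths of length m.\<close>
definition tpow :: "('e \<Rightarrow> 'j) \<Rightarrow> ('e \<Rightarrow> 'j) \<Rightarrow> nat \<Rightarrow> (('j \<times> 'e list) \<Rightarrow> 'k::zero) set" where
  "tpow s t m = {x. \<forall>p. x p \<noteq> 0 \<longrightarrow> p \<in> paths s t m}"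

definition tcomp :: "('e \<Rightarrow> 'j) \<Rightarrow> ('e \<Rightarrow> 'j) \<Rightarrow> nat \<Rightarrow> 'j \<Rightarrow> 'j \<Rightarrow> (('j \<times> 'e list) \<Rightarrow> 'k::zero) set" where
  "tcomp s t m i k = {x \<in> tpow s t m. \<forall>p. x p \<noteq> 0 \<longrightarrow> psrc p = i \<and> ptgt t p = k}"

text \<open>P_{m->n} = Hom_{Vec(J x J)}(V^{tensor m}, V^{tensor n}): grading-preserving linear maps
  (taken extensional, i.e. 0 outside V^{tensor m}).\<close>
definition homP :: "('e \<Rightarrow> 'j) \<Rightarrow> ('e \<Rightarrow> 'j) \<Rightarrow> nat \<Rightarrow> nat
    \<Rightarrow> ((('j \<times> 'e list) \<Rightarrow> 'k::field) \<Rightarrow> (('j \<times> 'e list) \<Rightarrow> 'k)) set" where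
  "homP s t m n = {f.
      (\<forall>x \<in> tpow s t m. f x \<in> tpow s t n) \<and>
      (\<forall>x \<in> tpow s t m. \<forall>y \<in> tpow s t m. f (\<lambda>p. x p + y p) = (\<lambda>q. f x q + f y q)) \<and>
      (\<forall>c. \<forall>x \<in> tpow s t m. f (\<lambda>p. c * x p) = (\<lambda>q. c * f x q)) \<and>
      (\<forall>i k. \<forall>x \<in> tcomp s t m i k. f x \<in> tcomp s t n i k) \<and>
      (\<forall>x. x \<notin> tpow s t m \<longrightarrow> f x = (\<lambda>_. 0))}"

definition basisvec :: "('j \<times> 'e list) \<Rightarrow> (('j \<times> 'e list) \<Rightarrow> 'k::{zero,one})" where
  "basisvec p = (\<lambda>u. if u = p then 1 else 0)"

text \<open>id_{V^{tensor l}} tensor f tensor id_{V^{tensor r}} : V^{tensor (l+m+r)} -> V^{tensor (l+n+r)},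
  computed on the path bases: (id tensor f tensor id)(e_a tensor e_p tensor e_b)
  = e_a tensor f(e_p) tensor e_b.\<close>
definition layer_app :: "('e \<Rightarrow> 'j) \<Rightarrow> ('e \<Rightarrow> 'j) \<Rightarrow> nat \<Rightarrow> nat \<Rightarrow> nat \<Rightarrow> nat
    \<Rightarrow> ((('j \<times> 'e list) \<Rightarrow> 'k::field) \<Rightarrow> (('j \<times> 'e list) \<Rightarrow> 'k))
    \<Rightarrow> (('j \<times> 'e list) \<Rightarrow> 'k) \<Rightarrow> (('j \<times> 'e list) \<Rightarrow> 'k)" where
  "layer_app s t l r m n f x = (\<lambda>z.
     if z \<in> paths s t (l + n + r) then
       (\<Sum>p \<in> {p \<in> paths s t m. psrc p = psrc (subpath t l n z)
                                 \<and> ptgt t p = ptgt t (subpath t l n z)}.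
          x (fst z, take l (snd z) @ snd p @ drop (l + n) (snd z)) * f (basisvec p) (subpath t l n z))
     else 0)"

text \<open>A monoidal tangle with k inputs is presented (up to isotopy) by a list of layers (l,i,r):
  from bottom to top, input rectangle i is placed with l strings to its left and r strings
  to its right. ins ! i = (m_i, n_i) gives the numbers of bottom/top strings of input i;
  the output rectangle has m0 strings at the bottom and n0 at the top. Every monoidal tangle
  has such a presentation (put the input rectangles at distinct heights).\<close>

fun widths_ok :: "(nat \<times> nat) list \<Rightarrow> nat \<Rightarrow> (nat \<times> nat \<times> nat) list \<Rightarrow> nat \<Rightarrow> bool" where
  "widths_ok ins w [] n0 = (w = n0)"
| "widths_ok ins w ((l, i, r) # Ls) n0 =
     (i < length ins \<and> l + fst (ins ! i) + r = w \<and> widths_ok ins (l + snd (ins ! i) + r) Ls n0)"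

definition wf_tangle :: "(nat \<times> nat) list \<Rightarrow> (nat \<times> nat \<times> nat) list \<Rightarrow> nat \<Rightarrow> nat \<Rightarrow> bool" where
  "wf_tangle ins Ls m0 n0 \<longleftrightarrow>
     distinct (map (\<lambda>(l, i, r). i) Ls) \<and> set (map (\<lambda>(l, i, r). i) Ls) = {..<length ins} \<and>
     widths_ok ins m0 Ls n0"

fun actP_layers :: "('e \<Rightarrow> 'j) \<Rightarrow> ('e \<Rightarrow> 'j) \<Rightarrow> (nat \<times> nat) list
    \<Rightarrow> (nat \<Rightarrow> ((('j \<times> 'e list) \<Rightarrow> 'k::field) \<Rightarrow> (('j \<times> 'e list) \<Rightarrow> 'k)))
    \<Rightarrow> (nat \<times> nat \<times> nat) list \<Rightarrow> (('j \<times> 'e list) \<Rightarrow> 'k) \<Rightarrow> (('j \<times> 'e list) \<Rightarrow> 'k)" where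
  "actP_layers s t ins fs [] x = x"
| "actP_layers s t ins fs ((l, i, r) # Ls) x =
     actP_layers s t ins fs Ls (layer_app s t l r (fst (ins ! i)) (snd (ins ! i)) (fs i) x)"

definition actP :: "('e \<Rightarrow> 'j) \<Rightarrow> ('e \<Rightarrow> 'j) \<Rightarrow> (nat \<times> nat) list \<Rightarrow> (nat \<times> nat \<times> nat) list \<Rightarrow> nat
    \<Rightarrow> (nat \<Rightarrow> ((('j \<times> 'e list) \<Rightarrow> 'k::field) \<Rightarrow> (('j \<times> 'e list) \<Rightarrow> 'k)))
    \<Rightarrow> ((('j \<times> 'e list) \<Rightarrow> 'k) \<Rightarrow> (('j \<times> 'e list) \<Rightarrow> 'k))" where
  "actP s t ins Ls m0 fs = (\<lambda>x. if x \<in> tpow s t m0 then actP_layers s t ins fs Ls x else (\<lambda>_. 0))"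

text \<open>GMA_{m->n}: vector space with basis the pairs (p,q), p of length m, q of length n,
  same source and same target; elements are coefficient functions.\<close>
definition gma :: "('e \<Rightarrow> 'j) \<Rightarrow> ('e \<Rightarrow> 'j) \<Rightarrow> nat \<Rightarrow> nat
    \<Rightarrow> ((('j \<times> 'e list) \<times> ('j \<times> 'e list)) \<Rightarrow> 'k::zero) set" where
  "gma s t m n = {c. \<forall>p q. c (p, q) \<noteq> 0 \<longrightarrow>
      p \<in> paths s t m \<and> q \<in> paths s t n \<and> psrc p = psrc q \<and> ptgt t p = ptgt t q}"

text \<open>States of a layered tangle: the paths read along horizontal lines between consecutive
  layers (sigma_0 at the bottom of the output rectangle, the last one at its top). Across
  layer (l,i,r), the l leftmost and r rightmost strings, and the leftmost/rightmost regions,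
  are unchanged, and the input rectangle i reads (bottom, top) = (p_i, q_i).\<close>
definition layer_ok :: "('e \<Rightarrow> 'j) \<Rightarrow> ('e \<Rightarrow> 'j) \<Rightarrow> nat \<Rightarrow> nat \<Rightarrow> nat \<Rightarrow> nat
    \<Rightarrow> ('j \<times> 'e list) \<Rightarrow> ('j \<times> 'e list) \<Rightarrow> bool" where
  "layer_ok s t l r m n \<sigma> \<sigma>' \<longleftrightarrow>
     \<sigma> \<in> paths s t (l + m + r) \<and> \<sigma>' \<in> paths s t (l + n + r) \<and>
     fst \<sigma> = fst \<sigma>' \<and> ptgt t \<sigma> = ptgt t \<sigma>' \<and>
     take l (snd \<sigma>) = take l (snd \<sigma>') \<and> drop (l + m) (snd \<sigma>) = drop (l + n) (snd \<sigma>')"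

definition gma_states :: "('e \<Rightarrow> 'j) \<Rightarrow> ('e \<Rightarrow> 'j) \<Rightarrow> (nat \<times> nat) list \<Rightarrow> (nat \<times> nat \<times> nat) list
    \<Rightarrow> nat \<Rightarrow> ('j \<times> 'e list) list set" where
  "gma_states s t ins Ls m0 = {\<sigma>s. length \<sigma>s = Suc (length Ls) \<and> \<sigma>s ! 0 \<in> paths s t m0 \<and>
     (\<forall>u < length Ls. case Ls ! u of (l, i, r) \<Rightarrow>
         layer_ok s t l r (fst (ins ! i)) (snd (ins ! i)) (\<sigma>s ! u) (\<sigma>s ! Suc u))}"

text \<open>The restriction sigma|_u of a state to the input rectangle placed in layer u.\<close>
definition box_state :: "('e \<Rightarrow> 'j) \<Rightarrow> (nat \<times> nat) list \<Rightarrow> (nat \<times> nat \<times> nat) list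
    \<Rightarrow> ('j \<times> 'e list) list \<Rightarrow> nat \<Rightarrow> ('j \<times> 'e list) \<times> ('j \<times> 'e list)" where
  "box_state t ins Ls \<sigma>s u = (case Ls ! u of (l, i, r) \<Rightarrow>
      (subpath t l (fst (ins ! i)) (\<sigma>s ! u), subpath t l (snd (ins ! i)) (\<sigma>s ! Suc u)))"

text \<open>Multilinear extension of
  T((p_1,q_1),...,(p_k,q_k)) = sum_sigma prod_i delta_{sigma|_i = (p_i,q_i)} sigma|_0.\<close>
definition actG :: "('e \<Rightarrow> 'j) \<Rightarrow> ('e \<Rightarrow> 'j) \<Rightarrow> (nat \<times> nat) list \<Rightarrow> (nat \<times> nat \<times> nat) list \<Rightarrow> nat
    \<Rightarrow> (nat \<Rightarrow> ((('j \<times> 'e list) \<times> ('j \<times> 'e list)) \<Rightarrow> 'k::field))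
    \<Rightarrow> ((('j \<times> 'e list) \<times> ('j \<times> 'e list)) \<Rightarrow> 'k)" where
  "actG s t ins Ls m0 cs = (\<lambda>(p0, q0).
      \<Sum>\<sigma>s \<in> {\<sigma>s \<in> gma_states s t ins Ls m0. \<sigma>s ! 0 = p0 \<and> last \<sigma>s = q0}.
        \<Prod>u < length Ls. cs (case Ls ! u of (l, i, r) \<Rightarrow> i) (box_state t ins Ls \<sigma>s u))"

definition monoidal_iso_P_GMA :: "('e \<Rightarrow> 'j) \<Rightarrow> ('e \<Rightarrow> 'j)
    \<Rightarrow> (nat \<Rightarrow> nat \<Rightarrow> ((('j \<times> 'e list) \<Rightarrow> 'k::field) \<Rightarrow> (('j \<times> 'e list) \<Rightarrow> 'k))
         \<Rightarrow> ((('j \<times> 'e list) \<times> ('j \<times> 'e list)) \<Rightarrow> 'k)) \<Rightarrow> bool" where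
  "monoidal_iso_P_GMA s t \<Phi> \<longleftrightarrow>
     (\<forall>m n. bij_betw (\<Phi> m n) (homP s t m n) (gma s t m n) \<and>
        (\<forall>f \<in> homP s t m n. \<forall>g \<in> homP s t m n.
            \<Phi> m n (\<lambda>x q. f x q + g x q) = (\<lambda>b. \<Phi> m n f b + \<Phi> m n g b)) \<and>
        (\<forall>c. \<forall>f \<in> homP s t m n. \<Phi> m n (\<lambda>x q. c * f x q) = (\<lambda>b. c * \<Phi> m n f b))) \<and>
     (\<forall>ins Ls m0 n0 fs. wf_tangle ins Ls m0 n0 \<and>
        (\<forall>i < length ins. fs i \<in> homP s t (fst (ins ! i)) (snd (ins ! i))) \<longrightarrow>
        \<Phi> m0 n0 (actP s t ins Ls m0 fs) =
          actG s t ins Ls m0 (\<lambda>i. \<Phi> (fst (ins ! i)) (snd (ins ! i)) (fs i)))"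

end

theory Submission
  imports Defs
begin

text \<open>The isomorphism sends a map f from V^m to V^n to its matrix (p, q) \<mapsto> (f e_p)(q) in the
  bases of paths. Since f preserves the bi-grading, the entry vanishes unless p and q have the
  same source and target, so the matrix lies in GMA(Gamma), and every such matrix comes from a
  unique grading-preserving linear map. For the tangle actions, the matrix of id \<otimes> f \<otimes> id
  between paths b and z is the entry of f between their middle segments when b and z agree
  outside these segments, and 0 otherwise. Composing the layers of a tangle therefore sums,
  over all sequences of intermediate paths, the products of the entries of the inputs: this is
  the state sum defining the action on GMA(Gamma).\<close>

lemma walk_append: "walk s t v (xs @ ys) \<longleftrightarrow> walk s t v xs \<and> walk s t (endv t v xs) ys"
  by (induction xs arbitrary: v) auto

lemma endv_append: "endv t v (xs @ ys) = endv t (endv t v xs) ys"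
  by (induction xs arbitrary: v) auto

lemma walk_take: "walk s t v es \<Longrightarrow> walk s t v (take k es)"
  by (metis append_take_drop_id walk_append)

lemma walk_drop: "walk s t v es \<Longrightarrow> walk s t (endv t v (take k es)) (drop k es)"
  by (metis append_take_drop_id walk_append)

lemma endv_take_drop: "endv t (endv t v (take k es)) (drop k es) = endv t v es"
  by (metis append_take_drop_id endv_append)

lemma walk_endv_eq_imp_eq: "walk s t a es \<Longrightarrow> walk s t b es \<Longrightarrow> endv t a es = endv t b es \<Longrightarrow> a = b"
  by (cases es) auto

lemma finite_paths: "finite (paths (s :: 'e::finite \<Rightarrow> 'j::finite) t m)"
proof (rule finite_subset)
  show "paths s t m \<subseteq> UNIV \<times> {es. set es \<subseteq> UNIV \<and> length es = m}"
    by (auto simp: paths_def)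
qed (intro finite_cartesian_product finite_lists_length_eq; simp)

lemma psrc_subpath: "psrc (subpath t l m p) = endv t (fst p) (take l (snd p))"
  by (simp add: psrc_def subpath_def)

lemma ptgt_subpath: "ptgt t (subpath t l m p) = endv t (fst p) (take (l + m) (snd p))"
  by (simp add: ptgt_def subpath_def take_add endv_append)

lemma subpath_in_paths: "p \<in> paths s t w \<Longrightarrow> l + m \<le> w \<Longrightarrow> subpath t l m p \<in> paths s t m"
  by (auto simp: paths_def subpath_def intro!: walk_take walk_drop)

definition replace_segment :: "nat \<Rightarrow> nat \<Rightarrow> 'j \<times> 'e list \<Rightarrow> 'j \<times> 'e list \<Rightarrow> 'j \<times> 'e list" where
  "replace_segment l n z p = (fst z, take l (snd z) @ snd p @ drop (l + n) (snd z))"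

lemma subpath_replace_segment:
  assumes "l \<le> length (snd z)" "length (snd p) = m" "psrc p = psrc (subpath t l n z)"
  shows "subpath t l m (replace_segment l n z p) = p"
  using assms by (simp add: subpath_def replace_segment_def psrc_def prod_eq_iff)

lemma replace_segment_layer_ok:
  assumes z: "z \<in> paths s t (l + n + r)" and p: "p \<in> paths s t m"
    and src: "psrc p = psrc (subpath t l n z)" and tgt: "ptgt t p = ptgt t (subpath t l n z)"
  shows "layer_ok s t l r m n (replace_segment l n z p) z"
proof -
  obtain v Z where zZ: "z = (v, Z)" by force
  obtain a P where pP: "p = (a, P)" by force
  have Z: "length Z = l + n + r" "walk s t v Z" using z by (auto simp: zZ paths_def)
  have P: "length P = m" "walk s t a P" using p by (auto simp: pP paths_def)
  have a: "a = endv t v (take l Z)" and "endv t a P = endv t v (take (l + n) Z)"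
    using src tgt unfolding psrc_subpath ptgt_subpath by (simp_all add: pP zZ psrc_def ptgt_def)
  then have aP: "endv t (endv t v (take l Z)) P = endv t v (take (l + n) Z)" by simp
  show ?thesis
    using Z P unfolding layer_ok_def replace_segment_def zZ pP a
    by (simp add: paths_def walk_append endv_append aP walk_take walk_drop endv_take_drop ptgt_def)
qed

lemma layer_ok_subpath:
  assumes ok: "layer_ok s t l r m n b z"
  shows "subpath t l m b \<in> paths s t m" "psrc (subpath t l m b) = psrc (subpath t l n z)"
    "ptgt t (subpath t l m b) = ptgt t (subpath t l n z)"
    "replace_segment l n z (subpath t l m b) = b"
proof -
  obtain v Z where zZ: "z = (v, Z)" by force
  obtain B where bB: "b = (v, B)" using ok by (cases b) (simp add: layer_ok_def zZ)
  have B: "walk s t v B" and Z: "walk s t v Z"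
    and ends: "endv t v B = endv t v Z" and left: "take l B = take l Z"
    and right: "drop (l + m) B = drop (l + n) Z"
    using ok by (auto simp: layer_ok_def paths_def ptgt_def bB zZ)
  show "subpath t l m b \<in> paths s t m"
    using ok by (auto simp: layer_ok_def intro: subpath_in_paths)
  show "psrc (subpath t l m b) = psrc (subpath t l n z)"
    by (simp add: psrc_subpath bB zZ left)
  have "endv t v (take (l + m) B) = endv t v (take (l + n) Z)"
  proof (rule walk_endv_eq_imp_eq)
    show "walk s t (endv t v (take (l + m) B)) (drop (l + m) B)"
      using B by (rule walk_drop)
    show "walk s t (endv t v (take (l + n) Z)) (drop (l + m) B)"
      unfolding right using Z by (rule walk_drop)
    show "endv t (endv t v (take (l + m) B)) (drop (l + m) B) =
          endv t (endv t v (take (l + n) Z)) (drop (l + m) B)"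
      using ends right by (metis endv_take_drop)
  qed
  then show "ptgt t (subpath t l m b) = ptgt t (subpath t l n z)"
    by (simp add: ptgt_subpath bB zZ)
  have "take l B @ take m (drop l B) @ drop (l + m) B = B"
    by (metis append.assoc append_take_drop_id take_add)
  then show "replace_segment l n z (subpath t l m b) = b"
    by (simp add: replace_segment_def subpath_def bB zZ left right)
qed

definition matrix_coeffs :: "nat \<Rightarrow> nat \<Rightarrow> (('j \<times> 'e list \<Rightarrow> 'k::{zero,one}) \<Rightarrow> ('j \<times> 'e list \<Rightarrow> 'k))
    \<Rightarrow> ('j \<times> 'e list) \<times> ('j \<times> 'e list) \<Rightarrow> 'k" where
  "matrix_coeffs m n f = (\<lambda>(p, q). f (basisvec p) q)"

lemma matrix_coeffs_apply: "matrix_coeffs m n f (p, q) = f (basisvec p) q"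
  by (simp add: matrix_coeffs_def)

lemma layer_app_eq_sum_layer_ok:
  fixes s t :: "'e::finite \<Rightarrow> 'j::finite"
  assumes z: "z \<in> paths s t (l + n + r)"
  shows "layer_app s t l r m n f x z =
    (\<Sum>b\<in>paths s t (l + m + r).
       if layer_ok s t l r m n b z then x b * matrix_coeffs m n f (subpath t l m b, subpath t l n z) else 0)"
proof -
  let ?S = "{p \<in> paths s t m. psrc p = psrc (subpath t l n z) \<and> ptgt t p = ptgt t (subpath t l n z)}"
  let ?T = "{b \<in> paths s t (l + m + r). layer_ok s t l r m n b z}"
  let ?g = "\<lambda>p. f (basisvec p) (subpath t l n z)"
  have "layer_app s t l r m n f x z = (\<Sum>p\<in>?S. x (replace_segment l n z p) * ?g p)"
    using z by (simp add: layer_app_def replace_segment_def)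
  also have "\<dots> = (\<Sum>b\<in>?T. x b * ?g (subpath t l m b))"
  proof (rule sum.reindex_bij_witness[where i = "subpath t l m" and j = "replace_segment l n z"])
    fix p assume p: "p \<in> ?S"
    then show "subpath t l m (replace_segment l n z p) = p"
      using z by (intro subpath_replace_segment) (auto simp: paths_def)
    then show "x (replace_segment l n z p) * ?g (subpath t l m (replace_segment l n z p))
             = x (replace_segment l n z p) * ?g p" by simp
    show "replace_segment l n z p \<in> ?T"
      using p z replace_segment_layer_ok by (fastforce simp: layer_ok_def)
  next
    fix b assume "b \<in> ?T"
    then have "layer_ok s t l r m n b z" by blast
    then show "replace_segment l n z (subpath t l m b) = b" "subpath t l m b \<in> ?S"
      by (simp_all add: layer_ok_subpath)
  qed
  also have "\<dots> = (\<Sum>b\<in>paths s t (l + m + r).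
       if layer_ok s t l r m n b z then x b * ?g (subpath t l m b) else 0)"
    by (rule sum.inter_filter[OF finite_paths])
  finally show ?thesis by (simp only: matrix_coeffs_apply)
qed

lemma basisvec_in_tpow_iff: "(basisvec p :: _ \<Rightarrow> 'k::zero_neq_one) \<in> tpow s t m \<longleftrightarrow> p \<in> paths s t m"
  unfolding tpow_def basisvec_def mem_Collect_eq by (metis zero_neq_one)

lemma tpow_eq_sum_basisvec:
  fixes x :: "'j::finite \<times> 'e::finite list \<Rightarrow> 'k::field"
  assumes "x \<in> tpow s t m"
  shows "x = (\<lambda>u. \<Sum>p\<in>paths s t m. x p * basisvec p u)"
proof
  fix u
  have "(\<Sum>p\<in>paths s t m. x p * basisvec p u) = (if u \<in> paths s t m then x u else 0)"
    by (simp add: basisvec_def finite_paths if_distrib cong: if_cong)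
  moreover have "u \<notin> paths s t m \<Longrightarrow> x u = 0"
    using assms unfolding tpow_def by blast
  ultimately show "x u = (\<Sum>p\<in>paths s t m. x p * basisvec p u)"
    by simp
qed

lemma homP_add:
  "f \<in> homP s t m n \<Longrightarrow> x \<in> tpow s t m \<Longrightarrow> y \<in> tpow s t m \<Longrightarrow>
   f (\<lambda>p. x p + y p) = (\<lambda>q. f x q + f y q)"
  unfolding homP_def by blast

lemma homP_smult:
  "f \<in> homP s t m n \<Longrightarrow> x \<in> tpow s t m \<Longrightarrow> f (\<lambda>p. c * x p) = (\<lambda>q. c * f x q)"
  unfolding homP_def by blast

lemma homP_zero: "f \<in> homP s t m n \<Longrightarrow> f (\<lambda>_. 0) = (\<lambda>_. 0)"
  using homP_smult[of f s t m n "\<lambda>_. 0" 0] by (simp add: tpow_def)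

lemma homP_sum_basisvec:
  fixes f :: "('j \<times> 'e list \<Rightarrow> 'k::field) \<Rightarrow> ('j \<times> 'e list \<Rightarrow> 'k)"
  assumes f: "f \<in> homP s t m n" and S: "finite S" "S \<subseteq> paths s t m"
  shows "f (\<lambda>u. \<Sum>p\<in>S. x p * basisvec p u) = (\<lambda>q. \<Sum>p\<in>S. x p * f (basisvec p) q)"
  using S
proof (induction S rule: finite_induct)
  case empty
  then show ?case using homP_zero[OF f] by simp
next
  case (insert a S)
  let ?y = "\<lambda>u. \<Sum>p\<in>S. x p * basisvec p u"
  have a: "(basisvec a :: _ \<Rightarrow> 'k) \<in> tpow s t m"
    using insert.prems by (simp add: basisvec_in_tpow_iff)
  have "?y u = 0" if "u \<notin> S" for u
    using that by (auto simp: basisvec_def intro!: sum.neutral)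
  then have y: "?y \<in> tpow s t m"
    using insert.prems unfolding tpow_def by blast
  have "(\<lambda>u. x a * basisvec a u) \<in> tpow s t m"
    using a by (auto simp: tpow_def)
  then have "f (\<lambda>u. x a * basisvec a u + ?y u) = (\<lambda>q. f (\<lambda>u. x a * basisvec a u) q + f ?y q)"
    using homP_add[OF f _ y] by simp
  also have "f (\<lambda>u. x a * basisvec a u) = (\<lambda>q. x a * f (basisvec a) q)"
    using homP_smult[OF f a] by simp
  finally show ?case using insert by simp
qed

lemma homP_eq_sum_basisvec:
  fixes f :: "('j::finite \<times> 'e::finite list \<Rightarrow> 'k::field) \<Rightarrow> ('j \<times> 'e list \<Rightarrow> 'k)"
  assumes f: "f \<in> homP s t m n" and x: "x \<in> tpow s t m"
  shows "f x = (\<lambda>q. \<Sum>p\<in>paths s t m. x p * f (basisvec p) q)"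
proof -
  have "f x = f (\<lambda>u. \<Sum>p\<in>paths s t m. x p * basisvec p u)"
    using tpow_eq_sum_basisvec[OF x] by simp
  also have "\<dots> = (\<lambda>q. \<Sum>p\<in>paths s t m. x p * f (basisvec p) q)"
    by (rule homP_sum_basisvec[OF f finite_paths]) simp
  finally show ?thesis .
qed

definition hom_of_coeffs :: "('e \<Rightarrow> 'j) \<Rightarrow> ('e \<Rightarrow> 'j) \<Rightarrow> nat
    \<Rightarrow> (('j \<times> 'e list) \<times> ('j \<times> 'e list) \<Rightarrow> 'k::field)
    \<Rightarrow> ('j \<times> 'e list \<Rightarrow> 'k) \<Rightarrow> ('j \<times> 'e list \<Rightarrow> 'k)" where
  "hom_of_coeffs s t m c =
     (\<lambda>x. if x \<in> tpow s t m then (\<lambda>q. \<Sum>p\<in>paths s t m. x p * c (p, q)) else (\<lambda>_. 0))"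

lemma hom_of_coeffs_nonzeroE:
  assumes "hom_of_coeffs s t m c x q \<noteq> 0"
  obtains p where "x p \<noteq> 0" "c (p, q) \<noteq> 0"
proof -
  have "(\<Sum>p\<in>paths s t m. x p * c (p, q)) \<noteq> 0"
    using assms by (auto simp: hom_of_coeffs_def split: if_splits)
  then obtain p where "x p * c (p, q) \<noteq> 0"
    by (blast elim: sum.not_neutral_contains_not_neutral)
  then have "x p \<noteq> 0" "c (p, q) \<noteq> 0" by auto
  then show thesis by (rule that)
qed

lemma gma_nonzeroD:
  "c \<in> gma s t m n \<Longrightarrow> c (p, q) \<noteq> 0 \<Longrightarrow>
   p \<in> paths s t m \<and> q \<in> paths s t n \<and> psrc p = psrc q \<and> ptgt t p = ptgt t q"
  unfolding gma_def by blast

lemma hom_of_coeffs_in_tpow: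
  assumes "c \<in> gma s t m n"
  shows "hom_of_coeffs s t m c x \<in> tpow s t n"
  unfolding tpow_def
proof (intro CollectI allI impI)
  fix q assume "hom_of_coeffs s t m c x q \<noteq> 0"
  then obtain p where "c (p, q) \<noteq> 0" by (rule hom_of_coeffs_nonzeroE)
  then show "q \<in> paths s t n" using gma_nonzeroD[OF assms] by blast
qed

lemma hom_of_coeffs_in_tcomp:
  assumes c: "c \<in> gma s t m n" and x: "x \<in> tcomp s t m i k"
  shows "hom_of_coeffs s t m c x \<in> tcomp s t n i k"
proof -
  have "psrc q = i \<and> ptgt t q = k" if nz: "hom_of_coeffs s t m c x q \<noteq> 0" for q
  proof -
    obtain p where "x p \<noteq> 0" "c (p, q) \<noteq> 0"
      using nz by (rule hom_of_coeffs_nonzeroE)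
    moreover have "psrc p = i \<and> ptgt t p = k" if "x p \<noteq> 0" for p
      using x that unfolding tcomp_def by blast
    ultimately show ?thesis
      using gma_nonzeroD[OF c] by (metis (no_types))
  qed
  then show ?thesis
    using hom_of_coeffs_in_tpow[OF c] unfolding tcomp_def by blast
qed

lemma hom_of_coeffs_in_homP:
  fixes c :: "('j \<times> 'e list) \<times> ('j \<times> 'e list) \<Rightarrow> 'k::field"
  assumes c: "c \<in> gma s t m n"
  shows "hom_of_coeffs s t m c \<in> homP s t m n"
  unfolding homP_def
proof (intro CollectI conjI ballI allI impI)
  show "hom_of_coeffs s t m c x \<in> tpow s t n" for x
    using c by (rule hom_of_coeffs_in_tpow)
  show "hom_of_coeffs s t m c x \<in> tcomp s t n i k" if "x \<in> tcomp s t m i k" for x i k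
    using c that by (rule hom_of_coeffs_in_tcomp)
  show "hom_of_coeffs s t m c x = (\<lambda>_. 0)" if "x \<notin> tpow s t m" for x
    using that by (simp add: hom_of_coeffs_def)
next
  fix x y :: "'j \<times> 'e list \<Rightarrow> 'k" assume "x \<in> tpow s t m" "y \<in> tpow s t m"
  moreover from this have "(\<lambda>p. x p + y p) \<in> tpow s t m"
    unfolding tpow_def mem_Collect_eq by (metis add.right_neutral)
  ultimately show "hom_of_coeffs s t m c (\<lambda>p. x p + y p) =
      (\<lambda>q. hom_of_coeffs s t m c x q + hom_of_coeffs s t m c y q)"
    by (simp add: hom_of_coeffs_def distrib_right sum.distrib)
next
  fix a and x :: "'j \<times> 'e list \<Rightarrow> 'k" assume "x \<in> tpow s t m"
  moreover from this have "(\<lambda>p. a * x p) \<in> tpow s t m" by (auto simp: tpow_def)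
  ultimately show "hom_of_coeffs s t m c (\<lambda>p. a * x p) = (\<lambda>q. a * hom_of_coeffs s t m c x q)"
    by (simp add: hom_of_coeffs_def sum_distrib_left mult.assoc)
qed

lemma matrix_coeffs_hom_of_coeffs:
  fixes c :: "('j::finite \<times> 'e::finite list) \<times> ('j \<times> 'e list) \<Rightarrow> 'k::field"
  assumes c: "c \<in> gma s t m n"
  shows "matrix_coeffs m n (hom_of_coeffs s t m c) = c"
proof (intro ext, clarify)
  fix p q
  show "matrix_coeffs m n (hom_of_coeffs s t m c) (p, q) = c (p, q)"
  proof (cases "p \<in> paths s t m")
    case True
    then have "matrix_coeffs m n (hom_of_coeffs s t m c) (p, q) =
               (\<Sum>p'\<in>paths s t m. basisvec p p' * c (p', q))"
      by (simp add: matrix_coeffs_apply hom_of_coeffs_def basisvec_in_tpow_iff)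
    also have "\<dots> = (\<Sum>p'\<in>paths s t m. if p' = p then c (p, q) else 0)"
      by (rule sum.cong) (auto simp: basisvec_def)
    also have "\<dots> = c (p, q)" using True by (simp add: finite_paths)
    finally show ?thesis .
  next
    case False
    then have "c (p, q) = 0"
      using gma_nonzeroD[OF c] by blast
    with False show ?thesis
      by (simp add: matrix_coeffs_apply hom_of_coeffs_def basisvec_in_tpow_iff)
  qed
qed

lemma matrix_coeffs_in_gma:
  fixes f :: "('j \<times> 'e list \<Rightarrow> 'k::field) \<Rightarrow> ('j \<times> 'e list \<Rightarrow> 'k)"
  assumes f: "f \<in> homP s t m n"
  shows "matrix_coeffs m n f \<in> gma s t m n"
  unfolding gma_def
proof (intro CollectI allI impI)
  fix p q assume "matrix_coeffs m n f (p, q) \<noteq> 0"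
  then have nz: "f (basisvec p) q \<noteq> 0" by (simp add: matrix_coeffs_apply)
  have p: "p \<in> paths s t m"
  proof (rule ccontr)
    assume "p \<notin> paths s t m"
    then have "f (basisvec p) = (\<lambda>_. 0)"
      using f unfolding homP_def by (simp add: basisvec_in_tpow_iff)
    with nz show False by simp
  qed
  then have "(basisvec p :: _ \<Rightarrow> 'k) \<in> tpow s t m"
    by (simp add: basisvec_in_tpow_iff)
  then have "(basisvec p :: _ \<Rightarrow> 'k) \<in> tcomp s t m (psrc p) (ptgt t p)"
    by (auto simp: tcomp_def basisvec_def)
  then have "f (basisvec p) \<in> tcomp s t n (psrc p) (ptgt t p)"
    using f unfolding homP_def by blast
  then have "q \<in> paths s t n \<and> psrc q = psrc p \<and> ptgt t q = ptgt t p"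
    using nz unfolding tcomp_def tpow_def by blast
  with p show "p \<in> paths s t m \<and> q \<in> paths s t n \<and> psrc p = psrc q \<and> ptgt t p = ptgt t q"
    by simp
qed

lemma inj_on_matrix_coeffs:
  "inj_on (matrix_coeffs m n) (homP (s :: 'e::finite \<Rightarrow> 'j::finite) t m n :: (_ \<Rightarrow> _ \<Rightarrow> 'k::field) set)"
proof (rule inj_onI)
  fix f g :: "('j \<times> 'e list \<Rightarrow> 'k) \<Rightarrow> ('j \<times> 'e list \<Rightarrow> 'k)"
  assume f: "f \<in> homP s t m n" and g: "g \<in> homP s t m n"
    and eq: "matrix_coeffs m n f = matrix_coeffs m n g"
  have coeffs_eq: "f (basisvec p) q = g (basisvec p) q" for p q
    using fun_cong[OF eq, of "(p, q)"] by (simp add: matrix_coeffs_apply)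
  show "f = g"
  proof
    fix x
    show "f x = g x"
    proof (cases "x \<in> tpow s t m")
      case True
      then show ?thesis
        using coeffs_eq by (simp add: homP_eq_sum_basisvec[OF f] homP_eq_sum_basisvec[OF g])
    next
      case False
      then show ?thesis using f g unfolding homP_def by simp
    qed
  qed
qed

lemma bij_betw_matrix_coeffs:
  "bij_betw (matrix_coeffs m n) (homP (s :: 'e::finite \<Rightarrow> 'j::finite) t m n)
     (gma s t m n :: (_ \<Rightarrow> 'k::field) set)"
  unfolding bij_betw_def
proof
  show "inj_on (matrix_coeffs m n) (homP s t m n)"
    by (rule inj_on_matrix_coeffs)
  show "matrix_coeffs m n ` homP s t m n = (gma s t m n :: (_ \<Rightarrow> 'k) set)"
  proof
    show "matrix_coeffs m n ` homP s t m n \<subseteq> gma s t m n"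
      using matrix_coeffs_in_gma by blast
    show "gma s t m n \<subseteq> matrix_coeffs m n ` homP s t m n"
      using matrix_coeffs_hom_of_coeffs hom_of_coeffs_in_homP by (metis image_eqI subsetI)
  qed
qed

lemma gma_states_Nil: "gma_states s t ins [] w = (\<lambda>p. [p]) ` paths s t w"
proof (intro set_eqI iffI)
  fix \<sigma>s assume "\<sigma>s \<in> gma_states s t ins [] w"
  then have "length \<sigma>s = 1" "\<sigma>s ! 0 \<in> paths s t w" by (auto simp: gma_states_def)
  then show "\<sigma>s \<in> (\<lambda>p. [p]) ` paths s t w"
    by (cases \<sigma>s) auto
qed (auto simp: gma_states_def)

lemma Nil_notin_gma_states: "[] \<notin> gma_states s t ins Ls w"
  by (simp add: gma_states_def)

lemma Cons_in_gma_states_iff: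
  "p # \<sigma>s \<in> gma_states s t ins ((l, i, r) # Ls) w \<longleftrightarrow>
     p \<in> paths s t w \<and> layer_ok s t l r (fst (ins ! i)) (snd (ins ! i)) p (\<sigma>s ! 0) \<and>
     \<sigma>s \<in> gma_states s t ins Ls (l + snd (ins ! i) + r)"
  by (auto simp: gma_states_def All_less_Suc2 layer_ok_def)

lemma gma_states_Cons_subset:
  "gma_states s t ins ((l, i, r) # Ls) w \<subseteq>
     (\<lambda>(p, \<sigma>s). p # \<sigma>s) ` (paths s t w \<times> gma_states s t ins Ls (l + snd (ins ! i) + r))"
proof
  fix \<sigma>s assume "\<sigma>s \<in> gma_states s t ins ((l, i, r) # Ls) w"
  then show "\<sigma>s \<in> (\<lambda>(p, \<sigma>s). p # \<sigma>s) ` (paths s t w \<times> gma_states s t ins Ls (l + snd (ins ! i) + r))"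
    by (cases \<sigma>s) (auto simp: Nil_notin_gma_states Cons_in_gma_states_iff)
qed

lemma finite_gma_states: "finite (gma_states (s :: 'e::finite \<Rightarrow> 'j::finite) t ins Ls w)"
proof (induction Ls arbitrary: w)
  case Nil
  then show ?case by (simp add: gma_states_Nil finite_paths)
next
  case (Cons L Ls)
  obtain l i r where "L = (l, i, r)" by (cases L)
  then show ?case
    using Cons.IH finite_paths by (blast intro: finite_subset[OF gma_states_Cons_subset])
qed

lemma actG_Nil: "actG s t ins [] w cs (p, q) = (if p \<in> paths s t w \<and> p = q then 1 else 0)"
proof -
  have "{\<sigma>s \<in> gma_states s t ins [] w. \<sigma>s ! 0 = p \<and> last \<sigma>s = q} =
        (if p \<in> paths s t w \<and> p = q then {[p]} else {})"
    by (auto simp: gma_states_Nil)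
  then show ?thesis by (auto simp: actG_def)
qed

lemma actG_eq_0_if_notin_paths:
  assumes "p \<notin> paths s t w"
  shows "actG s t ins Ls w cs (p, q) = 0"
proof -
  have "{\<sigma>s \<in> gma_states s t ins Ls w. \<sigma>s ! 0 = p \<and> last \<sigma>s = q} = {}"
    using assms by (auto simp: gma_states_def)
  then show ?thesis unfolding actG_def prod.case by (simp only: sum.empty)
qed

lemma gma_states_Cons_from:
  assumes w: "w = l + fst (ins ! i) + r"
  shows "{\<sigma>s \<in> gma_states s t ins ((l, i, r) # Ls) w. \<sigma>s ! 0 = p \<and> last \<sigma>s = q} =
    Cons p ` {\<sigma>s \<in> gma_states s t ins Ls (l + snd (ins ! i) + r).
                layer_ok s t l r (fst (ins ! i)) (snd (ins ! i)) p (\<sigma>s ! 0) \<and> last \<sigma>s = q}"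
proof (intro set_eqI iffI)
  fix \<sigma>s assume "\<sigma>s \<in> {\<sigma>s \<in> gma_states s t ins ((l, i, r) # Ls) w. \<sigma>s ! 0 = p \<and> last \<sigma>s = q}"
  then show "\<sigma>s \<in> Cons p ` {\<sigma>s \<in> gma_states s t ins Ls (l + snd (ins ! i) + r).
                layer_ok s t l r (fst (ins ! i)) (snd (ins ! i)) p (\<sigma>s ! 0) \<and> last \<sigma>s = q}"
    by (cases \<sigma>s) (auto simp: Nil_notin_gma_states Cons_in_gma_states_iff)
qed (use w in \<open>auto simp: Nil_notin_gma_states Cons_in_gma_states_iff layer_ok_def\<close>)

lemma actG_Cons:
  fixes s t :: "'e::finite \<Rightarrow> 'j::finite" and cs :: "nat \<Rightarrow> _ \<Rightarrow> 'k::field"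
  assumes w: "w = l + fst (ins ! i) + r"
  shows "actG s t ins ((l, i, r) # Ls) w cs (p, q) =
    (\<Sum>z\<in>paths s t (l + snd (ins ! i) + r).
       if layer_ok s t l r (fst (ins ! i)) (snd (ins ! i)) p z
       then cs i (subpath t l (fst (ins ! i)) p, subpath t l (snd (ins ! i)) z) *
            actG s t ins Ls (l + snd (ins ! i) + r) cs (z, q)
       else 0)"
proof -
  define m n where "m = fst (ins ! i)" and "n = snd (ins ! i)"
  let ?w' = "l + n + r"
  let ?F = "\<lambda>z. cs i (subpath t l m p, subpath t l n z)"
  let ?G = "\<lambda>\<sigma>s. \<Prod>u<length Ls. cs (case Ls ! u of (l, i, r) \<Rightarrow> i) (box_state t ins Ls \<sigma>s u)"
  let ?T = "{\<sigma>s \<in> gma_states s t ins Ls ?w'. layer_ok s t l r m n p (\<sigma>s ! 0) \<and> last \<sigma>s = q}"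
  have weight_Cons: "(\<Prod>u<Suc (length Ls). cs (case ((l, i, r) # Ls) ! u of (l, i, r) \<Rightarrow> i)
      (box_state t ins ((l, i, r) # Ls) (p # \<sigma>s) u)) = ?F (\<sigma>s ! 0) * ?G \<sigma>s" for \<sigma>s
    unfolding prod.lessThan_Suc_shift
    by (simp add: box_state_def m_def n_def del: prod.lessThan_Suc)
  have "actG s t ins ((l, i, r) # Ls) w cs (p, q) = (\<Sum>\<sigma>s\<in>?T. ?F (\<sigma>s ! 0) * ?G \<sigma>s)"
    unfolding actG_def gma_states_Cons_from[OF w]
    by (simp add: sum.reindex weight_Cons m_def n_def del: prod.lessThan_Suc length_Cons)
  also have "\<dots> = (\<Sum>z\<in>paths s t ?w'. \<Sum>\<sigma>s\<in>{\<sigma>s \<in> ?T. \<sigma>s ! 0 = z}. ?F (\<sigma>s ! 0) * ?G \<sigma>s)"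
    by (rule sum.group[symmetric])
       (auto simp: gma_states_def finite_paths intro: finite_subset[OF _ finite_gma_states])
  also have "\<dots> = (\<Sum>z\<in>paths s t ?w'.
      if layer_ok s t l r m n p z then ?F z * actG s t ins Ls ?w' cs (z, q) else 0)"
  proof (rule sum.cong[OF refl])
    fix z
    have "{\<sigma>s \<in> ?T. \<sigma>s ! 0 = z} = (if layer_ok s t l r m n p z
        then {\<sigma>s \<in> gma_states s t ins Ls ?w'. \<sigma>s ! 0 = z \<and> last \<sigma>s = q} else {})"
      by auto
    then show "(\<Sum>\<sigma>s\<in>{\<sigma>s \<in> ?T. \<sigma>s ! 0 = z}. ?F (\<sigma>s ! 0) * ?G \<sigma>s) =
        (if layer_ok s t l r m n p z then ?F z * actG s t ins Ls ?w' cs (z, q) else 0)"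
      by (simp add: actG_def sum_distrib_left)
  qed
  finally show ?thesis unfolding m_def n_def .
qed

lemma actP_layers_eq_sum_actG:
  fixes s t :: "'e::finite \<Rightarrow> 'j::finite"
    and fs :: "nat \<Rightarrow> (('j \<times> 'e list \<Rightarrow> 'k::field) \<Rightarrow> ('j \<times> 'e list \<Rightarrow> 'k))"
    and ins :: "(nat \<times> nat) list"
  defines "cs \<equiv> \<lambda>i. matrix_coeffs (fst (ins ! i)) (snd (ins ! i)) (fs i)"
  assumes "widths_ok ins w Ls n0" and "x \<in> tpow s t w"
  shows "actP_layers s t ins fs Ls x q = (\<Sum>p\<in>paths s t w. x p * actG s t ins Ls w cs (p, q))"
  using assms(2,3)
proof (induction Ls arbitrary: w x)
  case Nil
  have "x q = 0" if "q \<notin> paths s t w"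
    using Nil.prems(2) that unfolding tpow_def by blast
  then show ?case
    by (auto simp: actG_Nil finite_paths if_distrib cong: if_cong)
next
  case (Cons L Ls)
  obtain l i r where L: "L = (l, i, r)" by (cases L)
  define m n where "m = fst (ins ! i)" and "n = snd (ins ! i)"
  have w: "w = l + m + r" and widths: "widths_ok ins (l + n + r) Ls n0"
    using Cons.prems(1) by (auto simp: L m_def n_def)
  let ?A = "\<lambda>z. actG s t ins Ls (l + n + r) cs (z, q)"
  let ?c = "\<lambda>p z. cs i (subpath t l m p, subpath t l n z)"
  define y where "y = layer_app s t l r m n (fs i) x"
  have "y \<in> tpow s t (l + n + r)" by (auto simp: y_def layer_app_def tpow_def)
  then have "actP_layers s t ins fs (L # Ls) x q = (\<Sum>z\<in>paths s t (l + n + r). y z * ?A z)"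
    using Cons.IH[OF widths] by (simp add: L y_def m_def n_def)
  also have "\<dots> = (\<Sum>z\<in>paths s t (l + n + r). \<Sum>p\<in>paths s t w.
      if layer_ok s t l r m n p z then x p * (?c p z * ?A z) else 0)"
    by (intro sum.cong refl)
       (auto simp: y_def layer_app_eq_sum_layer_ok w cs_def m_def n_def sum_distrib_right
         intro!: sum.cong)
  also have "\<dots> = (\<Sum>p\<in>paths s t w. \<Sum>z\<in>paths s t (l + n + r).
      if layer_ok s t l r m n p z then x p * (?c p z * ?A z) else 0)"
    by (rule sum.swap)
  also have "\<dots> = (\<Sum>p\<in>paths s t w. x p * actG s t ins (L # Ls) w cs (p, q))"
    unfolding L actG_Cons[OF w[unfolded m_def]]
    by (auto simp: sum_distrib_left m_def n_def intro!: sum.cong)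
  finally show ?case .
qed

lemma matrix_coeffs_actP:
  fixes s t :: "'e::finite \<Rightarrow> 'j::finite"
    and fs :: "nat \<Rightarrow> (('j \<times> 'e list \<Rightarrow> 'k::field) \<Rightarrow> ('j \<times> 'e list \<Rightarrow> 'k))"
  assumes "widths_ok ins m0 Ls n0"
  shows "matrix_coeffs m0 n0 (actP s t ins Ls m0 fs) =
         actG s t ins Ls m0 (\<lambda>i. matrix_coeffs (fst (ins ! i)) (snd (ins ! i)) (fs i))"
proof (intro ext, clarify)
  fix p q
  let ?cs = "\<lambda>i. matrix_coeffs (fst (ins ! i)) (snd (ins ! i)) (fs i)"
  show "matrix_coeffs m0 n0 (actP s t ins Ls m0 fs) (p, q) = actG s t ins Ls m0 ?cs (p, q)"
  proof (cases "p \<in> paths s t m0")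
    case True
    then have p: "(basisvec p :: _ \<Rightarrow> 'k) \<in> tpow s t m0" by (simp add: basisvec_in_tpow_iff)
    have "matrix_coeffs m0 n0 (actP s t ins Ls m0 fs) (p, q)
        = (\<Sum>p'\<in>paths s t m0. basisvec p p' * actG s t ins Ls m0 ?cs (p', q))"
      using actP_layers_eq_sum_actG[OF assms p] p by (simp add: matrix_coeffs_apply actP_def)
    also have "\<dots> = (\<Sum>p'\<in>paths s t m0. if p' = p then actG s t ins Ls m0 ?cs (p, q) else 0)"
      by (rule sum.cong) (auto simp: basisvec_def)
    also have "\<dots> = actG s t ins Ls m0 ?cs (p, q)"
      using True by (simp add: finite_paths)
    finally show ?thesis .
  next
    case False
    then show ?thesis
      by (simp add: matrix_coeffs_apply actP_def basisvec_in_tpow_iff actG_eq_0_if_notin_paths)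
  qed
qed

theorem theorem3p35:
  fixes s t :: "'e::finite \<Rightarrow> 'j::finite"
  assumes "connected_bigraded (Vcomp s t :: 'j \<Rightarrow> 'j \<Rightarrow> ('e \<Rightarrow> 'k::field) set)"
  shows "\<exists>\<Phi> :: nat \<Rightarrow> nat \<Rightarrow> ((('j \<times> 'e list) \<Rightarrow> 'k) \<Rightarrow> (('j \<times> 'e list) \<Rightarrow> 'k))
              \<Rightarrow> ((('j \<times> 'e list) \<times> ('j \<times> 'e list)) \<Rightarrow> 'k).
           monoidal_iso_P_GMA s t \<Phi>"
proof
  show "monoidal_iso_P_GMA s t matrix_coeffs"
    unfolding monoidal_iso_P_GMA_def
    using bij_betw_matrix_coeffs matrix_coeffs_actP
    by (auto simp: matrix_coeffs_def wf_tangle_def)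
qed

end
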